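(* If $\mathcal D$ is an edge-independent unbounded probabilistic graph (i.e. $\mathcal D$ belongs to the class of edge-independent graphs defined in the context), then $\mathcal D\notin\mathsf{sjfCQ}(\mathsf{BID})$.
   Context: Fix a countably infinite universe $U$ equipped with a linear order $<$. Facts are $R(u_1,\dots,u_{\mathrm{ar}(R)})$ with $R$ from a finite schema and $u_i\in U$; instances are finite sets of facts; $\mathrm{adom}(D)$ is the set of elements of $U$ occurring in $D$. A probabilistic database (PDB) is a discrete probability space $(\mathbb D,P)$ with $\mathbb D$ a nonempty countable set of instances; its possible worlds are instances of positive probability and $\mathrm{facts}(\mathcal D)$ is their union. A graph database is an instance over a single binary relation $E$; it is simple if it has no fact $E(a,a)$ and undirected if $E(a,b)\in D$ implies $E(b,a)\in D$. The class of edge-independent graphs consists of the PDBs $\mathcal D$ such that: every possible world is a simple undirected graph database; for every sequence of pairwise distinct two-element subsets $\{a_1,b_1\},\dots,\{a_k,b_k\}$ of $U$, $\Pr_{D\sim\mathcal D}(E(a_i,b_i)\in D\text{ for all }i)=\prod_i\Pr_{D\sim\mathcal D}(E(a_i,b_i)\in D)$; and for every $n\in\mathbb N$ there is a possible world $D$ with $|D|>n$. A PDB $\mathcal I$ is block-independent disjoint ($\mathsf{BID}$) if $\mathrm{facts}(\mathcal I)$ can be partitioned into blocks such that facts $f_1,\dots,f_k$ from pairwise different blocks satisfy $\Pr(f_1\in I,\dots,f_k\in I)=\prod_i\Pr(f_i\in I)$ and distinct facts $f,f'$ of the same block satisfy $\Pr(f\in I\text{ and }f'\in I)=0$. A self-join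 free conjunctive query is a formula built from relational atoms $R(\bar u)$ ($\bar u$ variables or constants) and equality atoms using only $\exists,\wedge$, with each relation symbol occurring at most once, evaluated under active domain semantics; an sjfCQ-view consists of one such formula $\Phi_R(x_1,\dots,x_{\mathrm{ar}(R)})$ per output relation $R$, mapping $D$ to the instance of all $R(\bar a)$ with $\bar a$ over $\mathrm{adom}(D)\cup\mathrm{adom}(\Phi_R)$ and $D\models\Phi_R[\bar a]$. The image of a PDB under a view $V$ is the push-forward distribution on $V(\mathbb D)$, and $\mathsf{sjfCQ}(\mathsf{BID})$ is the class of images of BID-PDBs under sjfCQ-views. *)

theory Defs
  imports "HOL-Probability.Probability" "HOL-Library.Disjoint_Sets"
begin

text \<open>Facts over a schema with relation symbols of type r and universe u:
  a fact R(u1,...,uk) is the pair (R, [u1,...,uk]).\<close>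

type_synonym ('r, 'u) fact = "'r \<times> 'u list"
type_synonym ('r, 'u) db_instance = "('r, 'u) fact set"

definition fact_over :: "'r set \<Rightarrow> ('r \<Rightarrow> nat) \<Rightarrow> ('r, 'u) fact \<Rightarrow> bool" where
  "fact_over S ar f \<longleftrightarrow> fst f \<in> S \<and> length (snd f) = ar (fst f)"

definition instance_over :: "'r set \<Rightarrow> ('r \<Rightarrow> nat) \<Rightarrow> ('r, 'u) db_instance \<Rightarrow> bool" where
  "instance_over S ar D \<longleftrightarrow> finite D \<and> (\<forall>f\<in>D. fact_over S ar f)"

definition adom :: "('r, 'u) db_instance \<Rightarrow> 'u set" where
  "adom D = (\<Union>f\<in>D. set (snd f))"

text \<open>A PDB is a discrete probability distribution (pmf) on instances; its possible
  worlds are the instances of positive probability (set_pmf).\<close>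

definition pdb_over :: "'r set \<Rightarrow> ('r \<Rightarrow> nat) \<Rightarrow> ('r, 'u) db_instance pmf \<Rightarrow> bool" where
  "pdb_over S ar I \<longleftrightarrow> (\<forall>D\<in>set_pmf I. instance_over S ar D)"

definition pdb_facts :: "'a set pmf \<Rightarrow> 'a set" where
  "pdb_facts I = (\<Union>D\<in>set_pmf I. D)"

definition BID :: "'r set \<Rightarrow> ('r \<Rightarrow> nat) \<Rightarrow> ('r, 'u) db_instance pmf \<Rightarrow> bool" where
  "BID S ar I \<longleftrightarrow> finite S \<and> pdb_over S ar I \<and>
     (\<exists>P. partition_on (pdb_facts I) P \<and>
        (\<forall>fs. set fs \<subseteq> pdb_facts I \<longrightarrow>
              (\<forall>i<length fs. \<forall>j<length fs. i \<noteq> j \<longrightarrow> \<not> (\<exists>B\<in>P. fs ! i \<in> B \<and> fs ! j \<in> B)) \<longrightarrow>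
              measure_pmf.prob I {D. \<forall>f\<in>set fs. f \<in> D}
                = prod_list (map (\<lambda>f. measure_pmf.prob I {D. f \<in> D}) fs)) \<and>
        (\<forall>B\<in>P. \<forall>f\<in>B. \<forall>f'\<in>B. f \<noteq> f' \<longrightarrow>
              measure_pmf.prob I {D. f \<in> D \<and> f' \<in> D} = 0))"

text \<open>A graph database is an instance over the single binary relation E;
  the fact E(a,b) is represented by the pair (a,b).\<close>

definition simple_graph_db :: "('u \<times> 'u) set \<Rightarrow> bool" where
  "simple_graph_db D \<longleftrightarrow> (\<forall>a. (a, a) \<notin> D)"

definition undirected_graph_db :: "('u \<times> 'u) set \<Rightarrow> bool" where
  "undirected_graph_db D \<longleftrightarrow> (\<forall>a b. (a, b) \<in> D \<longrightarrow> (b, a) \<in> D)"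

definition edge_independent_graph :: "('u \<times> 'u) set pmf \<Rightarrow> bool" where
  "edge_independent_graph G \<longleftrightarrow>
     (\<forall>D\<in>set_pmf G. finite D \<and> simple_graph_db D \<and> undirected_graph_db D) \<and>
     (\<forall>ps :: ('u \<times> 'u) list.
        (\<forall>(a, b)\<in>set ps. a \<noteq> b) \<longrightarrow> distinct (map (\<lambda>(a, b). {a, b}) ps) \<longrightarrow>
        measure_pmf.prob G {D. \<forall>(a, b)\<in>set ps. (a, b) \<in> D}
          = prod_list (map (\<lambda>(a, b). measure_pmf.prob G {D. (a, b) \<in> D}) ps)) \<and>
     (\<forall>n::nat. \<exists>D\<in>set_pmf G. card D > n)"

datatype 'u cq_term = Var nat | Const 'u

datatype ('r, 'u) cq =
    Atom 'r "'u cq_term list"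
  | Eq "'u cq_term" "'u cq_term"
  | Conj "('r, 'u) cq" "('r, 'u) cq"
  | Ex nat "('r, 'u) cq"

fun term_val :: "(nat \<Rightarrow> 'u) \<Rightarrow> 'u cq_term \<Rightarrow> 'u" where
  "term_val \<nu> (Var x) = \<nu> x"
| "term_val \<nu> (Const c) = c"

fun term_consts :: "'u cq_term \<Rightarrow> 'u set" where
  "term_consts (Var x) = {}"
| "term_consts (Const c) = {c}"

fun term_vars :: "'u cq_term \<Rightarrow> nat set" where
  "term_vars (Var x) = {x}"
| "term_vars (Const c) = {}"

fun cq_consts :: "('r, 'u) cq \<Rightarrow> 'u set" where
  "cq_consts (Atom R ts) = (\<Union>t\<in>set ts. term_consts t)"
| "cq_consts (Eq t1 t2) = term_consts t1 \<union> term_consts t2"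
| "cq_consts (Conj \<phi> \<psi>) = cq_consts \<phi> \<union> cq_consts \<psi>"
| "cq_consts (Ex x \<phi>) = cq_consts \<phi>"

fun cq_free_vars :: "('r, 'u) cq \<Rightarrow> nat set" where
  "cq_free_vars (Atom R ts) = (\<Union>t\<in>set ts. term_vars t)"
| "cq_free_vars (Eq t1 t2) = term_vars t1 \<union> term_vars t2"
| "cq_free_vars (Conj \<phi> \<psi>) = cq_free_vars \<phi> \<union> cq_free_vars \<psi>"
| "cq_free_vars (Ex x \<phi>) = cq_free_vars \<phi> - {x}"

fun cq_rels :: "('r, 'u) cq \<Rightarrow> 'r list" where
  "cq_rels (Atom R ts) = [R]"
| "cq_rels (Eq t1 t2) = []"
| "cq_rels (Conj \<phi> \<psi>) = cq_rels \<phi> @ cq_rels \<psi>"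
| "cq_rels (Ex x \<phi>) = cq_rels \<phi>"

fun cq_over :: "'r set \<Rightarrow> ('r \<Rightarrow> nat) \<Rightarrow> ('r, 'u) cq \<Rightarrow> bool" where
  "cq_over S ar (Atom R ts) \<longleftrightarrow> R \<in> S \<and> length ts = ar R"
| "cq_over S ar (Eq t1 t2) \<longleftrightarrow> True"
| "cq_over S ar (Conj \<phi> \<psi>) \<longleftrightarrow> cq_over S ar \<phi> \<and> cq_over S ar \<psi>"
| "cq_over S ar (Ex x \<phi>) \<longleftrightarrow> cq_over S ar \<phi>"

definition sjf_cq :: "'r set \<Rightarrow> ('r \<Rightarrow> nat) \<Rightarrow> ('r, 'u) cq \<Rightarrow> bool" where
  "sjf_cq S ar \<phi> \<longleftrightarrow> cq_over S ar \<phi> \<and> distinct (cq_rels \<phi>)"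

text \<open>Satisfaction, with quantifiers ranging over the domain A (active domain).\<close>
fun cq_sat :: "('r, 'u) db_instance \<Rightarrow> 'u set \<Rightarrow> (nat \<Rightarrow> 'u) \<Rightarrow> ('r, 'u) cq \<Rightarrow> bool" where
  "cq_sat D A \<nu> (Atom R ts) \<longleftrightarrow> (R, map (term_val \<nu>) ts) \<in> D"
| "cq_sat D A \<nu> (Eq t1 t2) \<longleftrightarrow> term_val \<nu> t1 = term_val \<nu> t2"
| "cq_sat D A \<nu> (Conj \<phi> \<psi>) \<longleftrightarrow> cq_sat D A \<nu> \<phi> \<and> cq_sat D A \<nu> \<psi>"
| "cq_sat D A \<nu> (Ex x \<phi>) \<longleftrightarrow> (\<exists>a\<in>A. cq_sat D A (\<nu>(x := a)) \<phi>)"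

text \<open>An sjfCQ-view with the single output relation E (binary), given by a formula
  Phi_E(x1, x2) whose free variables are among x1 = Var 0 and x2 = Var 1.\<close>
definition graph_view :: "('r, 'u) cq \<Rightarrow> ('r, 'u) db_instance \<Rightarrow> ('u \<times> 'u) set" where
  "graph_view \<Phi> D =
     (let A = adom D \<union> cq_consts \<Phi> in
      {(a, b). a \<in> A \<and> b \<in> A \<and> cq_sat D A ((\<lambda>_. a)(0 := a, 1 := b)) \<Phi>})"

definition sjfCQ_graph_view :: "'r set \<Rightarrow> ('r \<Rightarrow> nat) \<Rightarrow> ('r, 'u) cq \<Rightarrow> bool" where
  "sjfCQ_graph_view S ar \<Phi> \<longleftrightarrow> sjf_cq S ar \<Phi> \<and> cq_free_vars \<Phi> \<subseteq> {0, 1}"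

definition in_sjfCQ_BID :: "'r itself \<Rightarrow> ('u \<times> 'u) set pmf \<Rightarrow> bool" where
  "in_sjfCQ_BID _ G \<longleftrightarrow>
     (\<exists>(S :: 'r set) ar (I :: ('r, 'u) db_instance pmf) \<Phi>.
        BID S ar I \<and> sjfCQ_graph_view S ar \<Phi> \<and> G = map_pmf (graph_view \<Phi>) I)"

end

theory Submission
  imports Defs
begin

text \<open>
  Suppose the graph is the image of a BID PDB under an sjfCQ-view \<open>\<Phi>\<close>. Because worlds are
  finite, a second moment argument bounds the total marginal probability of all finite sets of
  facts, so the facts outside some finite set \<open>F0\<close> together weigh at most \<open>1/2\<close>. Every vertex
  of every world then lies in the active domain of \<open>F0\<close>, contradicting unboundedness. Indeed,
  let \<open>(a, b)\<close> be an edge with \<open>b\<close> outside it. Self-join freeness gives a witness \<open>F\<close> of the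
  edge with one fact per relation, and by block independence some world \<open>W \<supseteq> F\<close> contains no
  further fact mentioning \<open>b\<close>. In \<open>W\<close> the edge \<open>(a, b)\<close> persists and by symmetry so does
  \<open>(b, a)\<close>; merging the two satisfying assignments, with \<open>b\<close> replaced by \<open>a\<close> where they
  disagree, satisfies \<open>\<Phi>\<close> at \<open>(a, a)\<close>, contradicting simplicity.
\<close>

section \<open>Self-join free conjunctive queries\<close>

lemma term_val_comp:
  assumes "\<And>c. c \<in> term_consts t \<Longrightarrow> h c = c"
  shows "term_val (h \<circ> \<nu>) t = h (term_val \<nu> t)"
  using assms by (cases t) auto

lemma cq_sat_hom:
  assumes "cq_sat D A \<nu> \<phi>"
    and "\<And>R xs. (R, xs) \<in> D \<Longrightarrow> (R, map h xs) \<in> D'"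
    and "\<And>c. c \<in> cq_consts \<phi> \<Longrightarrow> h c = c"
    and "h ` A \<subseteq> A'"
  shows "cq_sat D' A' (h \<circ> \<nu>) \<phi>"
  using assms
proof (induction \<phi> arbitrary: \<nu>)
  case (Atom R ts)
  then have "map (term_val (h \<circ> \<nu>)) ts = map h (map (term_val \<nu>) ts)"
    by (auto intro!: term_val_comp)
  moreover have "(R, map h (map (term_val \<nu>) ts)) \<in> D'"
    using Atom.prems(1) Atom.prems(2)[of R "map (term_val \<nu>) ts"] by simp
  ultimately show ?case by (simp only: cq_sat.simps)
next
  case (Eq t1 t2)
  have "term_val (h \<circ> \<nu>) t1 = h (term_val \<nu> t1)" "term_val (h \<circ> \<nu>) t2 = h (term_val \<nu> t2)"
    using Eq.prems(3) by (auto intro!: term_val_comp)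
  with Eq.prems(1) show ?case by (simp only: cq_sat.simps)
next
  case (Ex x \<phi>)
  then obtain a where "a \<in> A" "cq_sat D A (\<nu>(x := a)) \<phi>" by auto
  then have "cq_sat D' A' (h \<circ> \<nu>(x := a)) \<phi>"
    using Ex.IH[OF _ Ex.prems(2) Ex.prems(3)[unfolded cq_consts.simps] Ex.prems(4)] by blast
  moreover have "h \<circ> \<nu>(x := a) = (h \<circ> \<nu>)(x := h a)" by auto
  moreover have "h a \<in> A'" using \<open>a \<in> A\<close> Ex.prems(4) by auto
  ultimately show ?case unfolding cq_sat.simps by auto
qed simp

lemma cq_sat_mono:
  assumes "cq_sat D A \<nu> \<phi>" "D \<subseteq> D'" "A \<subseteq> A'"
  shows "cq_sat D' A' \<nu> \<phi>"
  using cq_sat_hom[OF assms(1), of id] assms(2,3) by auto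

lemma set_subset_adom: "(R, xs) \<in> D \<Longrightarrow> set xs \<subseteq> adom D"
  by (force simp: adom_def)

lemma adom_mono: "D \<subseteq> D' \<Longrightarrow> adom D \<subseteq> adom D'"
  by (auto simp: adom_def)

lemma cq_sat_change_domain:
  assumes "cq_sat D A \<nu> \<phi>" "range \<nu> \<subseteq> B" "adom D \<union> cq_consts \<phi> \<subseteq> B"
  shows "cq_sat D B \<nu> \<phi>"
proof -
  define r where "r x = (if x \<in> B then x else \<nu> 0)" for x
  have "cq_sat D B (r \<circ> \<nu>) \<phi>"
  proof (rule cq_sat_hom[OF assms(1)])
    fix R xs assume "(R, xs) \<in> D"
    moreover from this have "map r xs = xs"
      using assms(3) set_subset_adom[of R xs D] by (auto simp: r_def intro!: map_idI)
    ultimately show "(R, map r xs) \<in> D" by simp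
  qed (use assms(2,3) in \<open>auto simp: r_def\<close>)
  moreover have "r \<circ> \<nu> = \<nu>" using assms(2) by (auto simp: r_def comp_def image_subset_iff)
  ultimately show ?thesis by simp
qed

lemma cq_sat_rename_unused:
  assumes "cq_sat D A \<nu> \<phi>" "c \<notin> adom D \<union> cq_consts \<phi>" "d \<in> A"
  shows "cq_sat D A ((\<lambda>x. if x = c then d else x) \<circ> \<nu>) \<phi>"
proof (rule cq_sat_hom[OF assms(1)])
  fix R xs assume "(R, xs) \<in> D"
  moreover from this have "map (\<lambda>x. if x = c then d else x) xs = xs"
    using assms(2) set_subset_adom[of R xs D] by (auto intro!: map_idI)
  ultimately show "(R, map (\<lambda>x. if x = c then d else x) xs) \<in> D" by simp
qed (use assms(2,3) in auto)

lemma cq_sat_witness: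
  assumes "distinct (cq_rels \<phi>)" "cq_sat D A \<nu> \<phi>"
  shows "\<exists>F\<subseteq>D. fst ` F \<subseteq> set (cq_rels \<phi>) \<and> inj_on fst F \<and> cq_sat F A \<nu> \<phi>"
  using assms
proof (induction \<phi> arbitrary: \<nu>)
  case (Atom R ts)
  then show ?case by (intro exI[of _ "{(R, map (term_val \<nu>) ts)}"]) auto
next
  case (Eq t1 t2)
  then show ?case by (intro exI[of _ "{}"]) auto
next
  case (Conj \<phi>1 \<phi>2)
  have "distinct (cq_rels \<phi>1)" "cq_sat D A \<nu> \<phi>1"
    using Conj.prems by auto
  from Conj.IH(1)[OF this] obtain F1 where
    F1: "F1 \<subseteq> D" "fst ` F1 \<subseteq> set (cq_rels \<phi>1)" "inj_on fst F1" "cq_sat F1 A \<nu> \<phi>1"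
    by blast
  have "distinct (cq_rels \<phi>2)" "cq_sat D A \<nu> \<phi>2"
    using Conj.prems by auto
  from Conj.IH(2)[OF this] obtain F2 where
    F2: "F2 \<subseteq> D" "fst ` F2 \<subseteq> set (cq_rels \<phi>2)" "inj_on fst F2" "cq_sat F2 A \<nu> \<phi>2"
    by blast
  have "fst ` F1 \<inter> fst ` F2 = {}"
    using Conj.prems(1) F1(2) F2(2) by auto
  then have "inj_on fst (F1 \<union> F2)"
    unfolding inj_on_Un using F1(3) F2(3) by blast
  moreover have "cq_sat (F1 \<union> F2) A \<nu> (Conj \<phi>1 \<phi>2)"
    using cq_sat_mono[OF F1(4), of "F1 \<union> F2" A] cq_sat_mono[OF F2(4), of "F1 \<union> F2" A] by simp
  ultimately show ?case using F1(1,2) F2(1,2) by (intro exI[of _ "F1 \<union> F2"]) auto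
next
  case (Ex x \<phi>)
  then obtain a where a: "a \<in> A" "cq_sat D A (\<nu>(x := a)) \<phi>" by auto
  have "distinct (cq_rels \<phi>)" using Ex.prems(1) by simp
  from Ex.IH[OF this a(2)] obtain F where F: "F \<subseteq> D" "fst ` F \<subseteq> set (cq_rels \<phi>)" "inj_on fst F"
    "cq_sat F A (\<nu>(x := a)) \<phi>" by blast
  from F(4) a(1) have "cq_sat F A \<nu> (Ex x \<phi>)" by auto
  with F(1-3) show ?case by auto
qed

definition mix_asg :: "'u \<Rightarrow> 'u \<Rightarrow> (nat \<Rightarrow> 'u) \<Rightarrow> (nat \<Rightarrow> 'u) \<Rightarrow> nat \<Rightarrow> 'u" where
  "mix_asg a b \<nu>1 \<nu>2 x = (if \<nu>1 x = \<nu>2 x then \<nu>1 x else if \<nu>2 x = b then a else \<nu>2 x)"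

lemma term_val_mix_asg:
  "term_val (mix_asg a b \<nu>1 \<nu>2) t =
    (if term_val \<nu>1 t = term_val \<nu>2 t then term_val \<nu>1 t
     else if term_val \<nu>2 t = b then a else term_val \<nu>2 t)"
  by (cases t) (auto simp: mix_asg_def)

text \<open>Atoms whose \<open>\<nu>2\<close>-image mentions \<open>b\<close> lie in \<open>F\<close>, where they must coincide with their
  \<open>\<nu>1\<close>-image; every other atom survives replacing \<open>b\<close> by \<open>a\<close>.\<close>
lemma cq_sat_mix_asg:
  assumes "cq_sat F A \<nu>1 \<phi>" "cq_sat W A \<nu>2 \<phi>" "F \<subseteq> W" "inj_on fst F"
    and "\<And>f. f \<in> W \<Longrightarrow> b \<in> set (snd f) \<Longrightarrow> f \<in> F" and "a \<in> A"
  shows "cq_sat W A (mix_asg a b \<nu>1 \<nu>2) \<phi>"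
  using assms
proof (induction \<phi> arbitrary: \<nu>1 \<nu>2)
  case (Atom R ts)
  let ?f1 = "(R, map (term_val \<nu>1) ts)" and ?f2 = "(R, map (term_val \<nu>2) ts)"
  have f1: "?f1 \<in> F" and f2: "?f2 \<in> W" using Atom.prems by auto
  show ?case
  proof (cases "b \<in> set (map (term_val \<nu>2) ts)")
    case True
    then have "?f2 \<in> F" using Atom.prems(5) f2 by auto
    with f1 have "?f1 = ?f2" using inj_onD[OF Atom.prems(4)] by (metis fst_conv)
    then have "map (term_val (mix_asg a b \<nu>1 \<nu>2)) ts = map (term_val \<nu>1) ts"
      by (auto simp: term_val_mix_asg map_eq_conv)
    with f1 Atom.prems(3) show ?thesis by (simp only: cq_sat.simps) blast
  next
    case False
    then have "map (term_val (mix_asg a b \<nu>1 \<nu>2)) ts = map (term_val \<nu>2) ts"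
      by (auto simp: term_val_mix_asg)
    with f2 show ?thesis by (simp only: cq_sat.simps)
  qed
next
  case (Eq t1 t2)
  then show ?case by (auto simp: term_val_mix_asg)
next
  case (Ex x \<phi>)
  from Ex.prems(1,2) obtain c1 c2 where c: "c1 \<in> A" "cq_sat F A (\<nu>1(x := c1)) \<phi>"
    "c2 \<in> A" "cq_sat W A (\<nu>2(x := c2)) \<phi>" by auto
  have "cq_sat W A (mix_asg a b (\<nu>1(x := c1)) (\<nu>2(x := c2))) \<phi>"
    by (rule Ex.IH[OF c(2,4) Ex.prems(3-6)])
  moreover have "mix_asg a b (\<nu>1(x := c1)) (\<nu>2(x := c2)) =
     (mix_asg a b \<nu>1 \<nu>2)(x := mix_asg a b (\<lambda>_. c1) (\<lambda>_. c2) x)"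
    by (auto simp: mix_asg_def)
  moreover have "mix_asg a b (\<lambda>_. c1) (\<lambda>_. c2) x \<in> A"
    using c Ex.prems(6) by (auto simp: mix_asg_def)
  ultimately show ?case by auto
next
  case (Conj \<phi>1 \<phi>2)
  from Conj.prems(1,2) have "cq_sat F A \<nu>1 \<phi>1" "cq_sat W A \<nu>2 \<phi>1" "cq_sat F A \<nu>1 \<phi>2" "cq_sat W A \<nu>2 \<phi>2"
    by auto
  with Conj.IH[OF _ _ Conj.prems(3-6)] show ?case by simp
qed

section \<open>Block-independent disjoint PDBs\<close>

lemma integrable_pmf_bounded:
  fixes f :: "'a \<Rightarrow> real"
  assumes "\<And>x. \<bar>f x\<bar> \<le> B"
  shows "integrable (measure_pmf p) f"
  by (rule measure_pmf.integrable_const_bound[where B = B]) (use assms in auto)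

lemma integrable_indicator_pmf [simp]: "integrable (measure_pmf p) (indicator A :: 'a \<Rightarrow> real)"
  by (rule integrable_pmf_bounded[where B = 1]) (simp add: indicator_def)

lemma prob_tail_small:
  fixes f :: "'a \<Rightarrow> nat"
  assumes "e > 0"
  obtains K where "measure_pmf.prob p {x. K < f x} < e"
proof -
  have "(\<lambda>K. measure_pmf.prob p {x. K < f x}) \<longlonglongrightarrow> measure_pmf.prob p (\<Inter>K. {x. K < f x})"
    by (rule measure_pmf.finite_Lim_measure_decseq) (auto simp: decseq_def)
  moreover have "(\<Inter>K. {x. K < f x}) = {}" by auto
  ultimately have "(\<lambda>K. measure_pmf.prob p {x. K < f x}) \<longlonglongrightarrow> 0" by simp
  with assms have "eventually (\<lambda>K. measure_pmf.prob p {x. K < f x} < e) sequentially"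
    by (intro order_tendstoD)
  then show ?thesis using that by (auto simp: eventually_sequentially)
qed

lemma prob_meets_countable_le:
  fixes p :: "'a set pmf"
  assumes "countable Y"
    and "\<And>X. finite X \<Longrightarrow> X \<subseteq> Y \<Longrightarrow> measure_pmf.prob p {D. Q D \<and> D \<inter> X \<noteq> {}} \<le> c"
  shows "measure_pmf.prob p {D. Q D \<and> D \<inter> Y \<noteq> {}} \<le> c"
proof (cases "Y = {}")
  case True
  then show ?thesis using assms(2)[of "{}"] by simp
next
  case False
  define e where "e = from_nat_into Y"
  have range_e: "range e = Y" unfolding e_def using False assms(1) by simp
  define E where "E n = {D. Q D \<and> D \<inter> e ` {..<n} \<noteq> {}}" for n
  have "incseq E"
    by (rule incseq_SucI) (auto simp: E_def lessThan_Suc)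
  then have "(\<lambda>n. measure_pmf.prob p (E n)) \<longlonglongrightarrow> measure_pmf.prob p (\<Union>n. E n)"
    by (intro measure_pmf.finite_Lim_measure_incseq) auto
  moreover have "measure_pmf.prob p (E n) \<le> c" for n
    unfolding E_def using range_e by (intro assms(2)) auto
  ultimately have "measure_pmf.prob p (\<Union>n. E n) \<le> c"
    by (intro LIMSEQ_le_const2) auto
  moreover have "(\<Union>n. E n) = {D. Q D \<and> D \<inter> Y \<noteq> {}}"
  proof (intro equalityI subsetI)
    fix D assume "D \<in> {D. Q D \<and> D \<inter> Y \<noteq> {}}"
    then obtain k where "Q D" "e k \<in> D" using range_e by blast
    then show "D \<in> (\<Union>n. E n)" by (auto simp: E_def intro!: exI[of _ "Suc k"])
  qed (use range_e in \<open>auto simp: E_def\<close>)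
  ultimately show ?thesis by simp
qed

lemma bounded_sums_small_tail:
  fixes w :: "'a \<Rightarrow> real"
  assumes "\<And>X. finite X \<Longrightarrow> X \<subseteq> A \<Longrightarrow> sum w X \<le> M" and "\<epsilon> > 0"
  obtains F0 where "finite F0" "F0 \<subseteq> A" "\<And>X. finite X \<Longrightarrow> X \<subseteq> A - F0 \<Longrightarrow> sum w X < \<epsilon>"
proof -
  define S where "S = sum w ` {X. finite X \<and> X \<subseteq> A}"
  have "bdd_above S" using assms(1) by (auto simp: S_def bdd_above_def)
  have "Sup S - \<epsilon> < Sup S" using assms(2) by simp
  moreover have "S \<noteq> {}" by (auto simp: S_def)
  ultimately obtain s where "s \<in> S" "Sup S - \<epsilon> < s" by (rule less_cSupE)
  then obtain F0 where F0: "finite F0" "F0 \<subseteq> A" "Sup S - \<epsilon> < sum w F0" by (auto simp: S_def)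
  have "sum w X < \<epsilon>" if "finite X" "X \<subseteq> A - F0" for X
  proof -
    have "sum w F0 + sum w X = sum w (F0 \<union> X)"
      using F0(1) that by (intro sum.union_disjoint[symmetric]) auto
    also have "\<dots> \<le> Sup S"
      using F0 that \<open>bdd_above S\<close> by (intro cSup_upper) (auto simp: S_def)
    finally show ?thesis using F0(3) by simp
  qed
  with F0(1,2) that show ?thesis by blast
qed

locale bid_pdb =
  fixes I :: "'a set pmf" and P :: "'a set set"
  assumes finite_worlds: "\<And>D. D \<in> set_pmf I \<Longrightarrow> finite D"
    and prob_subset_indep: "\<And>F. finite F \<Longrightarrow> F \<subseteq> pdb_facts I \<Longrightarrow>
      (\<And>B f g. B \<in> P \<Longrightarrow> f \<in> F \<inter> B \<Longrightarrow> g \<in> F \<inter> B \<Longrightarrow> f = g) \<Longrightarrow>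
      measure_pmf.prob I {D. F \<subseteq> D} = (\<Prod>f\<in>F. measure_pmf.prob I {D. f \<in> D})"
    and prob_same_block: "\<And>B f g. B \<in> P \<Longrightarrow> f \<in> B \<Longrightarrow> g \<in> B \<Longrightarrow> f \<noteq> g \<Longrightarrow>
      measure_pmf.prob I {D. f \<in> D \<and> g \<in> D} = 0"

lemma BID_imp_bid_pdb:
  assumes "BID S ar I"
  obtains P where "bid_pdb I P"
proof -
  from assms obtain P where
    indep: "\<And>fs. set fs \<subseteq> pdb_facts I \<Longrightarrow>
      (\<forall>i<length fs. \<forall>j<length fs. i \<noteq> j \<longrightarrow> \<not> (\<exists>B\<in>P. fs ! i \<in> B \<and> fs ! j \<in> B)) \<Longrightarrow>
      measure_pmf.prob I {D. \<forall>f\<in>set fs. f \<in> D}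
        = prod_list (map (\<lambda>f. measure_pmf.prob I {D. f \<in> D}) fs)"
    and excl: "\<forall>B\<in>P. \<forall>f\<in>B. \<forall>f'\<in>B. f \<noteq> f' \<longrightarrow> measure_pmf.prob I {D. f \<in> D \<and> f' \<in> D} = 0"
    and "pdb_over S ar I"
    unfolding BID_def by blast
  have "bid_pdb I P"
  proof
    show "finite D" if "D \<in> set_pmf I" for D
      using \<open>pdb_over S ar I\<close> that by (auto simp: pdb_over_def instance_over_def)
  next
    fix F assume F: "finite F" "F \<subseteq> pdb_facts I"
      and sep: "\<And>B f g. B \<in> P \<Longrightarrow> f \<in> F \<inter> B \<Longrightarrow> g \<in> F \<inter> B \<Longrightarrow> f = g"
    obtain fs where fs: "set fs = F" "distinct fs" using finite_distinct_list[OF F(1)] by blast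
    have "\<forall>i<length fs. \<forall>j<length fs. i \<noteq> j \<longrightarrow> \<not> (\<exists>B\<in>P. fs ! i \<in> B \<and> fs ! j \<in> B)"
      using fs sep by (metis IntI nth_eq_iff_index_eq nth_mem)
    with indep fs F(2) have "measure_pmf.prob I {D. \<forall>f\<in>set fs. f \<in> D}
        = prod_list (map (\<lambda>f. measure_pmf.prob I {D. f \<in> D}) fs)"
      by blast
    moreover have "{D. \<forall>f\<in>set fs. f \<in> D} = {D. F \<subseteq> D}" using fs(1) by auto
    ultimately show "measure_pmf.prob I {D. F \<subseteq> D} = (\<Prod>f\<in>F. measure_pmf.prob I {D. f \<in> D})"
      using fs by (metis prod.distinct_set_conv_list)
  qed (use excl in blast)
  then show ?thesis using that by blast
qed

context bid_pdb
begin

definition marginal :: "'a \<Rightarrow> real" where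
  "marginal f = measure_pmf.prob I {D. f \<in> D}"

lemma world_subset_facts: "D \<in> set_pmf I \<Longrightarrow> D \<subseteq> pdb_facts I"
  by (auto simp: pdb_facts_def)

lemma countable_facts: "countable (pdb_facts I)"
  unfolding pdb_facts_def
  by (intro countable_UN[OF countable_set_pmf] countable_finite finite_worlds)

lemma world_meets_block_once:
  assumes "D0 \<in> set_pmf I" "B \<in> P" "f \<in> D0 \<inter> B" "g \<in> D0 \<inter> B"
  shows "f = g"
proof (rule ccontr)
  assume "f \<noteq> g"
  with assms(2-4) have "measure_pmf.prob I {D. f \<in> D \<and> g \<in> D} = 0" by (intro prob_same_block) auto
  moreover have "measure_pmf.prob I {D. f \<in> D \<and> g \<in> D} > 0"
    using assms(1,3,4) by (intro measure_pmf_posI) auto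
  ultimately show False by simp
qed

lemma prob_insert_le:
  assumes "D0 \<in> set_pmf I" "F \<subseteq> D0" "x \<in> pdb_facts I" "x \<notin> F"
  shows "measure_pmf.prob I {D. insert x F \<subseteq> D} \<le> measure_pmf.prob I {D. F \<subseteq> D} * marginal x"
proof (cases "\<exists>B\<in>P. \<exists>f\<in>F. f \<in> B \<and> x \<in> B")
  case True
  then obtain B f where "B \<in> P" "f \<in> F" "f \<in> B" "x \<in> B" by blast
  with assms(4) have "measure_pmf.prob I {D. f \<in> D \<and> x \<in> D} = 0"
    by (intro prob_same_block) auto
  moreover have "measure_pmf.prob I {D. insert x F \<subseteq> D} \<le> measure_pmf.prob I {D. f \<in> D \<and> x \<in> D}"
    using \<open>f \<in> F\<close> by (intro measure_pmf.finite_measure_mono) auto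
  moreover have "0 \<le> measure_pmf.prob I {D. F \<subseteq> D} * marginal x" by (simp add: marginal_def)
  ultimately show ?thesis by linarith
next
  case False
  have F: "finite F" "F \<subseteq> pdb_facts I"
    using assms(1,2) finite_worlds world_subset_facts by (auto intro: finite_subset)
  have sep: "f = g" if "B \<in> P" "f \<in> F \<inter> B" "g \<in> F \<inter> B" for B f g
    using world_meets_block_once[OF assms(1) that(1)] that(2,3) assms(2) by blast
  have "measure_pmf.prob I {D. insert x F \<subseteq> D} = (\<Prod>f\<in>insert x F. marginal f)"
    unfolding marginal_def
    by (rule prob_subset_indep) (use F assms(3) sep False in auto)
  also have "\<dots> = (\<Prod>f\<in>F. marginal f) * marginal x"
    using F(1) assms(4) by (simp add: mult.commute)
  also have "(\<Prod>f\<in>F. marginal f) = measure_pmf.prob I {D. F \<subseteq> D}"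
    unfolding marginal_def
    by (rule prob_subset_indep[symmetric]) (use F sep in auto)
  finally show ?thesis by simp
qed

lemma prob_pair_le:
  assumes "f \<in> pdb_facts I" "g \<in> pdb_facts I" "f \<noteq> g"
  shows "measure_pmf.prob I {D. f \<in> D \<and> g \<in> D} \<le> marginal f * marginal g"
proof -
  from assms(1) obtain D0 where "D0 \<in> set_pmf I" "f \<in> D0" by (auto simp: pdb_facts_def)
  with assms(2,3) have "measure_pmf.prob I {D. insert g {f} \<subseteq> D}
      \<le> measure_pmf.prob I {D. {f} \<subseteq> D} * marginal g"
    by (intro prob_insert_le) auto
  then show ?thesis by (simp add: marginal_def conj_commute)
qed

lemma card_inter_eq_indicator_sum:
  "finite X \<Longrightarrow> real (card (X \<inter> D)) = (\<Sum>f\<in>X. indicator {D. f \<in> D} D)"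
  by (simp add: indicator_def sum.If_cases Int_def)

lemma expectation_card_inter:
  assumes "finite X"
  shows "measure_pmf.expectation I (\<lambda>D. real (card (X \<inter> D))) = sum marginal X"
proof -
  have "measure_pmf.expectation I (\<lambda>D. \<Sum>f\<in>X. indicator {D. f \<in> D} D :: real)
      = (\<Sum>f\<in>X. measure_pmf.expectation I (indicator {D. f \<in> D}))"
    by (intro Bochner_Integration.integral_sum integrable_indicator_pmf)
  then show ?thesis by (simp add: card_inter_eq_indicator_sum[OF assms] marginal_def)
qed

lemma second_moment_card_inter:
  assumes "finite X" "X \<subseteq> pdb_facts I"
  shows "measure_pmf.expectation I (\<lambda>D. (real (card (X \<inter> D)))\<^sup>2)
    \<le> sum marginal X + (sum marginal X)\<^sup>2"
proof -
  have square: "(real (card (X \<inter> D)))\<^sup>2 = (\<Sum>f\<in>X. \<Sum>g\<in>X. indicator {D. f \<in> D \<and> g \<in> D} D)" for D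
    unfolding card_inter_eq_indicator_sum[OF assms(1)] power2_eq_square sum_product
    by (intro sum.cong) (auto simp: indicator_def)
  have integrable: "integrable (measure_pmf I) (\<lambda>D. \<Sum>g\<in>X. indicator {D. f \<in> D \<and> g \<in> D} D :: real)"
    for f by (intro Bochner_Integration.integrable_sum integrable_indicator_pmf)
  have "measure_pmf.expectation I (\<lambda>D. (real (card (X \<inter> D)))\<^sup>2)
      = (\<Sum>f\<in>X. \<Sum>g\<in>X. measure_pmf.prob I {D. f \<in> D \<and> g \<in> D})"
    unfolding square
    by (simp add: Bochner_Integration.integral_sum integrable)
  also have "\<dots> \<le> (\<Sum>f\<in>X. \<Sum>g\<in>X. (if f = g then marginal f else 0) + marginal f * marginal g)"
    using assms(2) prob_pair_le by (intro sum_mono) (auto simp: marginal_def)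
  also have "\<dots> = sum marginal X + (sum marginal X)\<^sup>2"
    using assms(1) by (simp add: sum.distrib power2_eq_square sum_product)
  finally show ?thesis .
qed

lemma prob_card_inter_small:
  assumes "finite X" "X \<subseteq> pdb_facts I" "sum marginal X > 0"
  shows "measure_pmf.prob I {D. real (card (X \<inter> D)) \<le> sum marginal X / 2} \<le> 4 / sum marginal X"
proof -
  define m where "m = sum marginal X"
  define N where "N D = real (card (X \<inter> D))" for D
  have bounded: "\<bar>N D\<bar> \<le> real (card X)" for D
    by (simp add: N_def assms(1) card_mono)
  have "\<bar>(N D)\<^sup>2\<bar> \<le> (real (card X))\<^sup>2" for D
    using power_mono[OF bounded[of D], of 2] by simp
  then have integrable_square: "integrable (measure_pmf I) (\<lambda>D. (N D)\<^sup>2)"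
    by (rule integrable_pmf_bounded)
  have mean: "measure_pmf.expectation I N = m"
    unfolding N_def m_def by (rule expectation_card_inter[OF assms(1)])
  have "measure_pmf.expectation I (\<lambda>D. (N D - m)\<^sup>2) = measure_pmf.expectation I (\<lambda>D. (N D)\<^sup>2) - m\<^sup>2"
    using measure_pmf.variance_eq[OF integrable_pmf_bounded[OF bounded] integrable_square] mean by simp
  also have "\<dots> \<le> m"
    using second_moment_card_inter[OF assms(1,2)] by (simp add: N_def m_def)
  finally have variance: "measure_pmf.expectation I (\<lambda>D. (N D - m)\<^sup>2) \<le> m" .
  have "{D. N D \<le> m / 2} \<subseteq> {D \<in> space (measure_pmf I). m / 2 \<le> \<bar>N D - m\<bar>}"
    by (auto simp: abs_if)
  then have "measure_pmf.prob I {D. N D \<le> m / 2}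
      \<le> measure_pmf.prob I {D \<in> space (measure_pmf I). m / 2 \<le> \<bar>N D - m\<bar>}"
    by (intro measure_pmf.finite_measure_mono) auto
  also have "\<dots> \<le> measure_pmf.expectation I (\<lambda>D. (N D - m)\<^sup>2) / (m / 2)\<^sup>2"
    using measure_pmf.Chebyshev_inequality[OF _ integrable_square, of "m / 2"] assms(3) mean
    by (simp add: m_def)
  also have "\<dots> \<le> m / (m / 2)\<^sup>2"
    using variance by (intro divide_right_mono) auto
  also have "\<dots> = 4 / m"
    using assms(3) by (simp add: m_def power2_eq_square field_simps)
  finally show ?thesis by (simp add: N_def m_def)
qed

text \<open>By Chebyshev's inequality, a set of facts of large total weight \<open>m\<close> has more than \<open>m/2\<close> of
  its facts present with probability above \<open>1/2\<close>, whereas worlds with more than \<open>m/2\<close> facts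
  have small probability.\<close>
lemma sum_marginal_bounded:
  obtains M where "\<And>X. finite X \<Longrightarrow> X \<subseteq> pdb_facts I \<Longrightarrow> sum marginal X \<le> M"
proof -
  obtain K :: nat where K: "measure_pmf.prob I {D. K < card D} < 1 / 2"
    using prob_tail_small[of "1 / 2"] by auto
  have "sum marginal X \<le> max 8 (2 * real K)" if X: "finite X" "X \<subseteq> pdb_facts I" for X
  proof (rule ccontr)
    define m where "m = sum marginal X"
    assume "\<not> sum marginal X \<le> max 8 (2 * real K)"
    then have m: "m > 8" "m > 2 * real K" by (auto simp: m_def)
    have "measure_pmf.prob I {D. real (card (X \<inter> D)) \<le> m / 2} \<le> 4 / m"
      using prob_card_inter_small[OF X] m by (simp add: m_def)
    also have "\<dots> < 1 / 2" using m by (simp add: field_simps)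
    finally have small: "measure_pmf.prob I {D. real (card (X \<inter> D)) \<le> m / 2} < 1 / 2" .
    have "{D. \<not> real (card (X \<inter> D)) \<le> m / 2} \<inter> set_pmf I \<subseteq> {D. K < card D}"
    proof safe
      fix D assume "\<not> real (card (X \<inter> D)) \<le> m / 2" "D \<in> set_pmf I"
      moreover from this have "card (X \<inter> D) \<le> card D" by (intro card_mono finite_worlds) auto
      ultimately show "K < card D" using m by linarith
    qed
    then have "measure_pmf.prob I {D. \<not> real (card (X \<inter> D)) \<le> m / 2} \<le> measure_pmf.prob I {D. K < card D}"
      by (subst measure_Int_set_pmf[symmetric]) (intro measure_pmf.finite_measure_mono, auto)
    moreover have "measure_pmf.prob I {D. \<not> real (card (X \<inter> D)) \<le> m / 2}
        = 1 - measure_pmf.prob I {D. real (card (X \<inter> D)) \<le> m / 2}"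
      using measure_pmf.prob_compl[of "{D. real (card (X \<inter> D)) \<le> m / 2}" I]
      by (simp add: Compl_eq_Diff_UNIV[symmetric] Collect_neg_eq)
    ultimately show False using small K by linarith
  qed
  then show ?thesis using that by blast
qed

lemma prob_superset_meets_le:
  assumes "D0 \<in> set_pmf I" "F \<subseteq> D0" "finite X" "X \<subseteq> pdb_facts I - F"
  shows "measure_pmf.prob I {D. F \<subseteq> D \<and> D \<inter> X \<noteq> {}}
    \<le> measure_pmf.prob I {D. F \<subseteq> D} * sum marginal X"
proof -
  have "{D. F \<subseteq> D \<and> D \<inter> X \<noteq> {}} = (\<Union>x\<in>X. {D. insert x F \<subseteq> D})" by auto
  then have "measure_pmf.prob I {D. F \<subseteq> D \<and> D \<inter> X \<noteq> {}}
      \<le> (\<Sum>x\<in>X. measure_pmf.prob I {D. insert x F \<subseteq> D})"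
    using measure_pmf.finite_measure_subadditive_finite[OF assms(3)] by simp
  also have "\<dots> \<le> (\<Sum>x\<in>X. measure_pmf.prob I {D. F \<subseteq> D} * marginal x)"
    using assms by (intro sum_mono prob_insert_le) auto
  finally show ?thesis by (simp add: sum_distrib_left)
qed

text \<open>Conditioned on \<open>F \<subseteq> D\<close>, a fact outside \<open>F\<close> occurs with probability at most its marginal,
  so by the union bound the light facts are all missed with probability at least \<open>1/2\<close>.\<close>
lemma world_avoiding_light_facts:
  assumes "D0 \<in> set_pmf I" "F \<subseteq> D0"
    and light: "\<And>X. finite X \<Longrightarrow> X \<subseteq> Y \<inter> pdb_facts I - F \<Longrightarrow> sum marginal X \<le> 1 / 2"
  obtains W where "W \<in> set_pmf I" "F \<subseteq> W" "W \<inter> Y \<subseteq> F"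
proof -
  define Z where "Z = Y \<inter> pdb_facts I - F"
  define p where "p = measure_pmf.prob I {D. F \<subseteq> D}"
  have "p > 0" unfolding p_def using assms(1,2) by (intro measure_pmf_posI) auto
  have "measure_pmf.prob I {D. F \<subseteq> D \<and> D \<inter> Z \<noteq> {}} \<le> p / 2"
  proof (rule prob_meets_countable_le)
    show "countable Z" unfolding Z_def using countable_facts by (auto intro: countable_subset)
    fix X assume "finite X" "X \<subseteq> Z"
    then have "measure_pmf.prob I {D. F \<subseteq> D \<and> D \<inter> X \<noteq> {}} \<le> p * sum marginal X"
      unfolding p_def by (intro prob_superset_meets_le[OF assms(1,2)]) (auto simp: Z_def)
    also have "\<dots> \<le> p * (1 / 2)"
      using light \<open>finite X\<close> \<open>X \<subseteq> Z\<close> \<open>p > 0\<close> by (intro mult_left_mono) (auto simp: Z_def)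
    finally show "measure_pmf.prob I {D. F \<subseteq> D \<and> D \<inter> X \<noteq> {}} \<le> p / 2" by simp
  qed
  moreover have "measure_pmf.prob I {D. F \<subseteq> D \<and> D \<inter> Z = {}}
      = p - measure_pmf.prob I {D. F \<subseteq> D \<and> D \<inter> Z \<noteq> {}}"
  proof -
    have "{D. F \<subseteq> D \<and> D \<inter> Z = {}} = {D. F \<subseteq> D} - {D. F \<subseteq> D \<and> D \<inter> Z \<noteq> {}}" by auto
    then show ?thesis unfolding p_def by (simp only:) (rule measure_pmf.finite_measure_Diff, auto)
  qed
  ultimately have "measure_pmf.prob I {D. F \<subseteq> D \<and> D \<inter> Z = {}} > 0"
    using \<open>p > 0\<close> by linarith
  then have "set_pmf I \<inter> {D. F \<subseteq> D \<and> D \<inter> Z = {}} \<noteq> {}"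
    by (simp flip: measure_pmf_zero_iff)
  then obtain W where "W \<in> set_pmf I" "F \<subseteq> W" "W \<inter> Z = {}" by blast
  moreover from this(1) have "W \<subseteq> pdb_facts I" by (rule world_subset_facts)
  ultimately have "W \<inter> Y \<subseteq> F" by (auto simp: Z_def)
  with \<open>W \<in> set_pmf I\<close> \<open>F \<subseteq> W\<close> show ?thesis by (rule that)
qed

lemma facts_outside_finite_set_avoidable:
  obtains F0 where "finite F0"
    and "\<And>D0 F Y. D0 \<in> set_pmf I \<Longrightarrow> F \<subseteq> D0 \<Longrightarrow> Y \<inter> F0 = {} \<Longrightarrow>
      \<exists>W\<in>set_pmf I. F \<subseteq> W \<and> W \<inter> Y \<subseteq> F"
proof -
  obtain M where bound: "\<And>X. finite X \<Longrightarrow> X \<subseteq> pdb_facts I \<Longrightarrow> sum marginal X \<le> M"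
    using sum_marginal_bounded by blast
  obtain F0 where F0: "finite F0"
    and tail: "\<And>X. finite X \<Longrightarrow> X \<subseteq> pdb_facts I - F0 \<Longrightarrow> sum marginal X < 1 / 2"
    by (rule bounded_sums_small_tail[where \<epsilon> = "1 / 2", OF bound]) auto
  have "\<exists>W\<in>set_pmf I. F \<subseteq> W \<and> W \<inter> Y \<subseteq> F"
    if "D0 \<in> set_pmf I" "F \<subseteq> D0" "Y \<inter> F0 = {}" for D0 F Y
  proof -
    have "sum marginal X \<le> 1 / 2" if "finite X" "X \<subseteq> Y \<inter> pdb_facts I - F" for X
      using tail[of X] that \<open>Y \<inter> F0 = {}\<close> by fastforce
    then show ?thesis by (blast intro: world_avoiding_light_facts[OF that(1,2)])
  qed
  with F0 that show ?thesis by blast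
qed

end

section \<open>Graph views\<close>

definition edge_asg :: "'u \<Rightarrow> 'u \<Rightarrow> nat \<Rightarrow> 'u" where
  "edge_asg a b = (\<lambda>_. a)(0 := a, 1 := b)"

lemma range_edge_asg: "range (edge_asg a b) = {a, b}"
  by (auto simp: edge_asg_def)

lemma mem_graph_view_iff:
  "(a, b) \<in> graph_view \<Phi> D \<longleftrightarrow> {a, b} \<subseteq> adom D \<union> cq_consts \<Phi> \<and>
     cq_sat D (adom D \<union> cq_consts \<Phi>) (edge_asg a b) \<Phi>"
  by (simp add: graph_view_def edge_asg_def Let_def)

lemma graph_view_of_witness:
  assumes "cq_sat F (adom F \<union> cq_consts \<Phi>) (edge_asg a b) \<Phi>" "{a, b} \<subseteq> adom F \<union> cq_consts \<Phi>"
    and "F \<subseteq> D"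
  shows "(a, b) \<in> graph_view \<Phi> D"
proof -
  have dom: "adom F \<union> cq_consts \<Phi> \<subseteq> adom D \<union> cq_consts \<Phi>" using adom_mono[OF assms(3)] by blast
  with assms(2) cq_sat_mono[OF assms(1,3) dom] show ?thesis
    unfolding mem_graph_view_iff by blast
qed

text \<open>Both endpoints of an edge occur in its witness: otherwise renaming the missing endpoint
  into the other one would produce a loop.\<close>
lemma graph_view_edge_witness:
  assumes "distinct (cq_rels \<Phi>)" "(a, b) \<in> graph_view \<Phi> D"
    and "(a, a) \<notin> graph_view \<Phi> D" "(b, b) \<notin> graph_view \<Phi> D"
  obtains F where "F \<subseteq> D" "inj_on fst F" "{a, b} \<subseteq> adom F \<union> cq_consts \<Phi>"
    "cq_sat F (adom F \<union> cq_consts \<Phi>) (edge_asg a b) \<Phi>"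
proof -
  define A where "A = adom D \<union> cq_consts \<Phi>"
  from assms(2) have ab: "{a, b} \<subseteq> A" "cq_sat D A (edge_asg a b) \<Phi>"
    by (simp_all add: mem_graph_view_iff A_def)
  from cq_sat_witness[OF assms(1) ab(2)] obtain F
    where F: "F \<subseteq> D" "inj_on fst F" "cq_sat F A (edge_asg a b) \<Phi>" by blast
  have loop: "(d, d) \<in> graph_view \<Phi> D" if "c \<notin> adom F \<union> cq_consts \<Phi>" "{c, d} = {a, b}" for c d
  proof -
    have "d \<in> A" using ab(1) that(2) by blast
    with F(3) that(1) have "cq_sat F A ((\<lambda>x. if x = c then d else x) \<circ> edge_asg a b) \<Phi>"
      by (rule cq_sat_rename_unused)
    moreover have "(\<lambda>x. if x = c then d else x) \<circ> edge_asg a b = edge_asg d d"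
      using that(2) by (auto simp: edge_asg_def doubleton_eq_iff)
    ultimately have "cq_sat D A (edge_asg d d) \<Phi>" using cq_sat_mono[OF _ F(1)] by simp
    with \<open>d \<in> A\<close> show ?thesis by (simp add: mem_graph_view_iff A_def)
  qed
  have "a \<in> adom F \<union> cq_consts \<Phi>" using loop[of a b] assms(4) by blast
  moreover have "b \<in> adom F \<union> cq_consts \<Phi>" using loop[of b a] assms(3) by (auto simp: insert_commute)
  ultimately have "{a, b} \<subseteq> adom F \<union> cq_consts \<Phi>" by simp
  moreover from this have "cq_sat F (adom F \<union> cq_consts \<Phi>) (edge_asg a b) \<Phi>"
    by (intro cq_sat_change_domain[OF F(3)]) (simp_all add: range_edge_asg)
  ultimately show ?thesis using F(1,2) that by blast
qed

lemma graph_view_back_edge_loop: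
  assumes "F \<subseteq> W" "inj_on fst F" "cq_sat F (adom F \<union> cq_consts \<Phi>) (edge_asg a b) \<Phi>"
    and "a \<in> adom F \<union> cq_consts \<Phi>" "a \<noteq> b"
    and "\<And>f. f \<in> W \<Longrightarrow> b \<in> set (snd f) \<Longrightarrow> f \<in> F"
    and "(b, a) \<in> graph_view \<Phi> W"
  shows "(a, a) \<in> graph_view \<Phi> W"
proof -
  define A where "A = adom W \<union> cq_consts \<Phi>"
  have "adom F \<union> cq_consts \<Phi> \<subseteq> A" using adom_mono[OF assms(1)] by (auto simp: A_def)
  with assms(3) have "cq_sat F A (edge_asg a b) \<Phi>" by (rule cq_sat_mono[OF _ subset_refl])
  moreover have "cq_sat W A (edge_asg b a) \<Phi>" using assms(7) by (simp add: mem_graph_view_iff A_def)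
  moreover have "a \<in> A" using assms(4) \<open>adom F \<union> cq_consts \<Phi> \<subseteq> A\<close> by blast
  ultimately have "cq_sat W A (mix_asg a b (edge_asg a b) (edge_asg b a)) \<Phi>"
    using assms(1,2,6) by (intro cq_sat_mix_asg)
  moreover have "mix_asg a b (edge_asg a b) (edge_asg b a) = edge_asg a a"
    using assms(5) by (auto simp: mix_asg_def edge_asg_def)
  ultimately show ?thesis using \<open>a \<in> A\<close> by (simp add: mem_graph_view_iff A_def)
qed

lemma BID_sjf_graph_view_finite_vertices:
  fixes I :: "('r, 'u) db_instance pmf"
  assumes "BID S ar I" and sjf: "distinct (cq_rels \<Phi>)"
    and loopfree: "\<And>D x. D \<in> set_pmf I \<Longrightarrow> (x, x) \<notin> graph_view \<Phi> D"
    and undirected: "\<And>D. D \<in> set_pmf I \<Longrightarrow> undirected_graph_db (graph_view \<Phi> D)"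
  obtains H where "finite H" "\<And>D. D \<in> set_pmf I \<Longrightarrow> graph_view \<Phi> D \<subseteq> H \<times> H"
proof -
  obtain P where "bid_pdb I P" using BID_imp_bid_pdb[OF assms(1)] .
  then interpret bid_pdb I P .
  obtain F0 where "finite F0" and avoid: "\<And>D0 F Y. D0 \<in> set_pmf I \<Longrightarrow> F \<subseteq> D0 \<Longrightarrow> Y \<inter> F0 = {} \<Longrightarrow>
      \<exists>W\<in>set_pmf I. F \<subseteq> W \<and> W \<inter> Y \<subseteq> F"
    by (rule facts_outside_finite_set_avoidable) blast
  have endpoint: "b \<in> adom F0" if D0: "D0 \<in> set_pmf I" and ab: "(a, b) \<in> graph_view \<Phi> D0" for D0 a b
  proof (rule ccontr)
    assume "b \<notin> adom F0"
    then have "{f. b \<in> set (snd f)} \<inter> F0 = {}" by (auto simp: adom_def)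
    from graph_view_edge_witness[OF sjf ab loopfree[OF D0] loopfree[OF D0]]
    obtain F where F: "F \<subseteq> D0" "inj_on fst F"
      "{a, b} \<subseteq> adom F \<union> cq_consts \<Phi>" "cq_sat F (adom F \<union> cq_consts \<Phi>) (edge_asg a b) \<Phi>"
      by blast
    from avoid[OF D0 F(1) \<open>{f. b \<in> set (snd f)} \<inter> F0 = {}\<close>] obtain W where W: "W \<in> set_pmf I"
      "F \<subseteq> W" "\<And>f. f \<in> W \<Longrightarrow> b \<in> set (snd f) \<Longrightarrow> f \<in> F" by blast
    have "(a, b) \<in> graph_view \<Phi> W" by (rule graph_view_of_witness[OF F(4,3) W(2)])
    then have "(b, a) \<in> graph_view \<Phi> W"
      using undirected[OF W(1)] by (simp add: undirected_graph_db_def)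
    moreover have "a \<noteq> b" using ab loopfree[OF D0] by blast
    ultimately have "(a, a) \<in> graph_view \<Phi> W"
      using graph_view_back_edge_loop[OF W(2) F(2,4)] F(3) W(3) by simp
    with loopfree[OF W(1)] show False by blast
  qed
  have "graph_view \<Phi> D \<subseteq> adom F0 \<times> adom F0" if "D \<in> set_pmf I" for D
    using endpoint[OF that] undirected[OF that] by (auto simp: undirected_graph_db_def)
  moreover have "finite (adom F0)" using \<open>finite F0\<close> by (simp add: adom_def)
  ultimately show ?thesis using that by blast
qed

theorem lemma7p10:
  fixes G :: "('u :: {countable, linorder} \<times> 'u) set pmf"
  assumes "infinite (UNIV :: 'u set)"
    and "edge_independent_graph G"
  shows "\<not> in_sjfCQ_BID TYPE('r) G"
proof
  assume "in_sjfCQ_BID TYPE('r) G"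
  then obtain S ar and I :: "('r, 'u) db_instance pmf" and \<Phi> where "BID S ar I"
    and "sjfCQ_graph_view S ar \<Phi>" and G: "G = map_pmf (graph_view \<Phi>) I"
    unfolding in_sjfCQ_BID_def by blast
  then have sjf: "distinct (cq_rels \<Phi>)" by (simp add: sjfCQ_graph_view_def sjf_cq_def)
  have loopfree: "(x, x) \<notin> graph_view \<Phi> D" and undirected: "undirected_graph_db (graph_view \<Phi> D)"
    if "D \<in> set_pmf I" for D x
    using assms(2) that by (auto simp: G edge_independent_graph_def simple_graph_db_def)
  obtain H where "finite H" and bounded: "\<And>D. D \<in> set_pmf I \<Longrightarrow> graph_view \<Phi> D \<subseteq> H \<times> H"
    using BID_sjf_graph_view_finite_vertices[OF \<open>BID S ar I\<close> sjf loopfree undirected] by blast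
  have "\<forall>n. \<exists>D\<in>set_pmf I. n < card (graph_view \<Phi> D)"
    using assms(2) by (simp add: G edge_independent_graph_def)
  then obtain D where "D \<in> set_pmf I" "card (H \<times> H) < card (graph_view \<Phi> D)" by blast
  moreover from this(1) have "card (graph_view \<Phi> D) \<le> card (H \<times> H)"
    using bounded \<open>finite H\<close> by (intro card_mono) auto
  ultimately show False by simp
qed
end
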